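(* Let $f_1,\ldots,f_{i+1}\in R$, $I_i=\langle f_1,\ldots,f_i\rangle$, $I_{i+1}=\langle f_1,\ldots,f_{i+1}\rangle$ with $f_{i+1}\notin I_i$. Let $g_1,\ldots,g_M\in I_i$ be such that $\{g_1,\ldots,g_M\}$ is a Gröbner basis of $I_i$, let $p_1,\ldots,p_\ell\in I_{i+1}\setminus\{0\}$, $d_1,\ldots,d_\ell\in\mathbb{k}\setminus\{0\}$, $\tau_1,\ldots,\tau_\ell\in\mathbb{M}$, and let $$G=\{(\sigma_1\mathbf{e}_{j_1},g_1),\ldots,(\sigma_M\mathbf{e}_{j_M},g_M)\}\cup\{(\mathbf{e}_{i+1},f_{i+1}),(d_1\tau_1\mathbf{e}_{i+1},p_1),\ldots,(d_\ell\tau_\ell\mathbf{e}_{i+1},p_\ell)\}$$ with $j_1,\ldots,j_M\le i$. Assume that for every $(c\sigma\mathbf{e}_j,g)\in G$ one has $c\sigma\mathbf{e}_j\in\mathrm{sig}(g)$ and $\sigma\mathbf{e}_j=\mathrm{minsig}(g)$. Assume further that for every two elements $(c\sigma\mathbf{e}_{i+1},p),(d\tau\mathbf{e}_j,q)\in G$ with $p\ne q$, writing $u=t_{p,q}/t_p$ and $v=t_{p,q}/t_q$ and assuming $u\sigma\mathbf{e}_{i+1}\succeq v\tau\mathbf{e}_j$, one of the following holds: (i) $u\sigma\mathbf{e}_{i+1}=v\tau\mathbf{e}_j$ (as monic monomial signatures, i.e. $j=i+1$ and $u\sigma=v\tau$); or (ii) $u\sigma\mathbf{e}_{i+1}\succ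 v\tau\mathbf{e}_j$ and $(u\sigma\mathbf{e}_{i+1},\mathrm{S}(p,q))$ has a standard representation with respect to $G$. Then $\widehat G=\{g:(c\sigma\mathbf{e}_j,g)\in G\text{ for some } c\sigma\mathbf{e}_j\}$ is a Gröbner basis of $I_{i+1}$.
   Context: $R=\mathbb{k}[x_1,\ldots,x_n]$ over a field $\mathbb{k}$, $\mathbb{M}$ its monoid of monomials, $<$ a degree-compatible monomial ordering. For nonzero $p$: $t_p=\mathrm{lm}(p)$ (leading monomial), $c_p=\mathrm{lc}(p)$ (leading coefficient), $t_{p,q}=\mathrm{lcm}(t_p,t_q)$. The S-polynomial is $\mathrm{S}(p,q)=\frac{t_{p,q}}{t_p}p-\frac{c_p}{c_q}\frac{t_{p,q}}{t_q}q$. A standard representation of $s\in R$ with respect to a finite list $(g_1,\ldots,g_N)$ of polynomials is a tuple $(h_1,\ldots,h_N)$ in $R^N$ with $s=\sum h_kg_k$ and, for each $k$, $h_k=0$ or $\mathrm{lm}(h_k)\mathrm{lm}(g_k)\le\mathrm{lm}(s)$. Signatures: $\mathbf{e}_1,\ldots,\mathbf{e}_{i+1}$ are the canonical generators of $R^{i+1}$; a signature is a formal expression $c\tau\mathbf{e}_j$ ($c\in\mathbb{k}\setminus\{0\}$, $\tau\in\mathbb{M}$). For $p\in I_{i+1}$, if $p=h_1f_1+\cdots+h_jf_j$ with $j\le i+1$ and $h_j\ne0$, then $\mathrm{lc}(h_j)\mathrm{lm}(h_j)\mathbf{e}_j$ is a signature of $p$; $\mathrm{sig}(p)$ is the set of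 all of them. Order: $c\sigma\mathbf{e}_j\prec d\tau\mathbf{e}_k$ iff $j<k$, or $j=k$ and $\sigma<\tau$ (restricted to monic monomial signatures $\tau\mathbf{e}_j$ this is a well-ordering). $\mathrm{minsig}(p)$ is the unique $\prec$-minimal monic signature $\tau\mathbf{e}_j$ of $p$ (i.e. with $1\cdot\tau\mathbf{e}_j\in\mathrm{sig}(p)$). Signature standard representation: let $G=\{(c_k\mu_k\mathbf{e}_{j_k},g_k)\}_{k=1}^N$ be a finite set of pairs with $g_k\in I_{i+1}$ and $\mu_k\mathbf{e}_{j_k}=\mathrm{minsig}(g_k)$. A pair $(c\sigma\mathbf{e}_{i+1},s)$ with $s\in I_{i+1}$ has a standard representation with respect to $G$ if $c\sigma\mathbf{e}_{i+1}\in\mathrm{sig}(s)$ and there exist $h_1,\ldots,h_N\in R$ such that $(h_1,\ldots,h_N)$ is a standard representation of $s$ with respect to $(g_1,\ldots,g_N)$ and, for each $k$, $h_k=0$ or $\mathrm{lm}(h_k)\,\mathrm{minsig}(g_k)\preceq\sigma\mathbf{e}_{i+1}$ (where $t\cdot\mu\mathbf{e}_j=(t\mu)\mathbf{e}_j$). *)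

theory Defs
  imports "HOL-Library.Poly_Mapping"
begin

(* Monomials in the variables of the finite type 'v are exponent vectors 'v \<Rightarrow>\<^sub>0 nat
   (monomial multiplication = addition of exponent vectors, 1 = 0). *)
type_synonym 'v mon = "'v \<Rightarrow>\<^sub>0 nat"
type_synonym ('v, 'k) mpoly = "'v mon \<Rightarrow>\<^sub>0 'k"

definition mdeg :: "'v mon \<Rightarrow> nat" where
  "mdeg t = (\<Sum>x\<in>Poly_Mapping.keys t. Poly_Mapping.lookup t x)"

definition mdvd :: "'v mon \<Rightarrow> 'v mon \<Rightarrow> bool" where
  "mdvd s t \<longleftrightarrow> (\<exists>u. t = s + u)"

definition mlcm :: "'v mon \<Rightarrow> 'v mon \<Rightarrow> 'v mon" where
  "mlcm s t = Abs_poly_mapping (\<lambda>x. max (Poly_Mapping.lookup s x) (Poly_Mapping.lookup t x))"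

(* ord s t means s \<le> t; a degree-compatible monomial ordering *)
definition deg_mon_order :: "('v mon \<Rightarrow> 'v mon \<Rightarrow> bool) \<Rightarrow> bool" where
  "deg_mon_order ord \<longleftrightarrow>
     (\<forall>s. ord s s) \<and>
     (\<forall>s t. ord s t \<and> ord t s \<longrightarrow> s = t) \<and>
     (\<forall>s t u. ord s t \<and> ord t u \<longrightarrow> ord s u) \<and>
     (\<forall>s t. ord s t \<or> ord t s) \<and>
     (\<forall>t. ord 0 t) \<and>
     (\<forall>s t u. ord s t \<longrightarrow> ord (s + u) (t + u)) \<and>
     (\<forall>s t. mdeg s < mdeg t \<longrightarrow> ord s t \<and> s \<noteq> t)"

(* leading monomial (with the harmless convention lm 0 = 1) and leading coefficient *)
definition lm :: "('v mon \<Rightarrow> 'v mon \<Rightarrow> bool) \<Rightarrow> ('v, 'k::zero) mpoly \<Rightarrow> 'v mon" where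
  "lm ord p = (if p = 0 then 0 else (THE t. t \<in> Poly_Mapping.keys p \<and> (\<forall>s\<in>Poly_Mapping.keys p. ord s t)))"

definition lc :: "('v mon \<Rightarrow> 'v mon \<Rightarrow> bool) \<Rightarrow> ('v, 'k::zero) mpoly \<Rightarrow> 'k" where
  "lc ord p = Poly_Mapping.lookup p (lm ord p)"

definition tmul :: "'k::field \<Rightarrow> 'v mon \<Rightarrow> ('v, 'k) mpoly \<Rightarrow> ('v, 'k) mpoly" where
  "tmul c t p = Poly_Mapping.single t c * p"

definition spoly :: "('v mon \<Rightarrow> 'v mon \<Rightarrow> bool) \<Rightarrow> ('v, 'k::field) mpoly \<Rightarrow> ('v, 'k) mpoly \<Rightarrow> ('v, 'k) mpoly" where
  "spoly ord p q =
     (let t = mlcm (lm ord p) (lm ord q)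
      in tmul 1 (t - lm ord p) p - tmul (lc ord p / lc ord q) (t - lm ord q) q)"

definition gen_ideal :: "(nat \<Rightarrow> ('v, 'k::field) mpoly) \<Rightarrow> nat \<Rightarrow> ('v, 'k) mpoly set" where
  "gen_ideal f i = {q. \<exists>h. q = (\<Sum>k=1..i. h k * f k)}"

definition is_GB :: "('v mon \<Rightarrow> 'v mon \<Rightarrow> bool) \<Rightarrow> ('v, 'k::field) mpoly set \<Rightarrow> ('v, 'k) mpoly set \<Rightarrow> bool" where
  "is_GB ord G I \<longleftrightarrow> finite G \<and> G \<subseteq> I \<and>
     (\<forall>p\<in>I. p \<noteq> 0 \<longrightarrow> (\<exists>g\<in>G. g \<noteq> 0 \<and> mdvd (lm ord g) (lm ord p)))"

(* c * tau * e_j is a signature of p w.r.t. f_1,...,f_m  (here m = i+1) *)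
definition is_sig :: "('v mon \<Rightarrow> 'v mon \<Rightarrow> bool) \<Rightarrow> (nat \<Rightarrow> ('v, 'k::field) mpoly) \<Rightarrow> nat
     \<Rightarrow> 'k \<Rightarrow> 'v mon \<Rightarrow> nat \<Rightarrow> ('v, 'k) mpoly \<Rightarrow> bool" where
  "is_sig ord f m c tau j p \<longleftrightarrow> 1 \<le> j \<and> j \<le> m \<and>
     (\<exists>h. p = (\<Sum>k=1..j. h k * f k) \<and> h j \<noteq> 0 \<and> lc ord (h j) = c \<and> lm ord (h j) = tau)"

(* strict / non-strict order on monic signatures sigma e_j, represented as (sigma, j) *)
definition sig_less :: "('v mon \<Rightarrow> 'v mon \<Rightarrow> bool) \<Rightarrow> 'v mon \<times> nat \<Rightarrow> 'v mon \<times> nat \<Rightarrow> bool" where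
  "sig_less ord a b \<longleftrightarrow> snd a < snd b \<or> (snd a = snd b \<and> ord (fst a) (fst b) \<and> fst a \<noteq> fst b)"

definition sig_le :: "('v mon \<Rightarrow> 'v mon \<Rightarrow> bool) \<Rightarrow> 'v mon \<times> nat \<Rightarrow> 'v mon \<times> nat \<Rightarrow> bool" where
  "sig_le ord a b \<longleftrightarrow> sig_less ord a b \<or> a = b"

definition is_minsig :: "('v mon \<Rightarrow> 'v mon \<Rightarrow> bool) \<Rightarrow> (nat \<Rightarrow> ('v, 'k::field) mpoly) \<Rightarrow> nat
     \<Rightarrow> 'v mon \<Rightarrow> nat \<Rightarrow> ('v, 'k) mpoly \<Rightarrow> bool" where
  "is_minsig ord f m tau j p \<longleftrightarrow> is_sig ord f m 1 tau j p \<and>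
     (\<forall>tau' j'. is_sig ord f m 1 tau' j' p \<longrightarrow> sig_le ord (tau, j) (tau', j'))"

(* Elements of G are tuples (c, sigma, j, g) standing for the pair (c sigma e_j, g). *)
definition gc :: "'k \<times> 'v mon \<times> nat \<times> ('v, 'k) mpoly \<Rightarrow> 'k" where "gc x = fst x"
definition gsig :: "'k \<times> 'v mon \<times> nat \<times> ('v, 'k) mpoly \<Rightarrow> 'v mon" where "gsig x = fst (snd x)"
definition gidx :: "'k \<times> 'v mon \<times> nat \<times> ('v, 'k) mpoly \<Rightarrow> nat" where "gidx x = fst (snd (snd x))"
definition gpoly :: "'k \<times> 'v mon \<times> nat \<times> ('v, 'k) mpoly \<Rightarrow> ('v, 'k) mpoly" where "gpoly x = snd (snd (snd x))"

(* (c sigma e_m, s) has a signature standard representation w.r.t. G (m = i+1);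
   the tuple (h_1,...,h_N) is indexed by the elements of G.
   minsig(g_k) is the stored signature (gsig, gidx), as assumed for G. *)
definition sig_std_rep :: "('v mon \<Rightarrow> 'v mon \<Rightarrow> bool) \<Rightarrow> (nat \<Rightarrow> ('v, 'k::field) mpoly) \<Rightarrow> nat
     \<Rightarrow> ('k \<times> 'v mon \<times> nat \<times> ('v, 'k) mpoly) set \<Rightarrow> 'k \<Rightarrow> 'v mon \<Rightarrow> ('v, 'k) mpoly \<Rightarrow> bool" where
  "sig_std_rep ord f m G c sigma s \<longleftrightarrow> is_sig ord f m c sigma m s \<and>
     (\<exists>h. s = (\<Sum>x\<in>G. h x * gpoly x) \<and>
          (\<forall>x\<in>G. h x = 0 \<or>
             (ord (lm ord (h x) + lm ord (gpoly x)) (lm ord s) \<and>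
              sig_le ord (lm ord (h x) + gsig x, gidx x) (sigma, m))))"

end

theory Submission
  imports Defs
begin

(* Write F = f (i+1) and say that q has e_{i+1}-part below mu if q = a + h * F with a in I_i and
   every monomial of h at most mu.  The heart of the proof is the claim, proved by well-founded
   induction on mu, that every such q has a standard representation w.r.t. G all of whose terms
   have signature at most mu e_{i+1} (lemma main_claim).  Elements of I_i itself are handled by
   ordinary division by the Groebner basis g_1..g_M (lemma division).  In the induction step the
   top part c mu e_{i+1} of q is cancelled by the multiple of a "reducer" x in G with minimal
   leading monomial among those whose signature divides mu; the remainder is strictly below mu.
   If the leading term of the multiple survives, the representations simply combine; if it is
   cancelled by a term of smaller signature belonging to some y, the S-polynomial criterion for
   the pair (x, y) together with the minimality of x shows that the multiple of x is itself
   strictly below mu, and the induction hypothesis applies.  Since every element of I_{i+1} has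
   its e_{i+1}-part below some mu, every nonzero element has a standard representation, whose
   leading term exhibits an element of G with leading monomial dividing that of q. *)

lemma mdvd_iff: "mdvd s (t::'v::finite mon) \<longleftrightarrow> (\<forall>x. Poly_Mapping.lookup s x \<le> Poly_Mapping.lookup t x)"
proof
  assume "mdvd s t"
  then show "\<forall>x. Poly_Mapping.lookup s x \<le> Poly_Mapping.lookup t x"
    unfolding mdvd_def by (auto simp: lookup_add)
next
  assume le: "\<forall>x. Poly_Mapping.lookup s x \<le> Poly_Mapping.lookup t x"
  let ?u = "Abs_poly_mapping (\<lambda>x. Poly_Mapping.lookup t x - Poly_Mapping.lookup s x) :: 'v mon"
  have "t = s + ?u"
    by (rule poly_mapping_eqI) (use le in \<open>simp add: lookup_add\<close>)
  then show "mdvd s t" unfolding mdvd_def by blast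
qed

lemma lookup_mlcm:
  "Poly_Mapping.lookup (mlcm s t) x = max (Poly_Mapping.lookup s x) (Poly_Mapping.lookup (t::'v::finite mon) x)"
  unfolding mlcm_def by (subst lookup_Abs_poly_mapping) auto

lemma mdvd_mlcm1: "mdvd s (mlcm s (t::'v::finite mon))"
  by (simp add: mdvd_iff lookup_mlcm)

lemma mdvd_mlcm2: "mdvd t (mlcm s (t::'v::finite mon))"
  by (simp add: mdvd_iff lookup_mlcm)

lemma mlcm_least: "mdvd s L \<Longrightarrow> mdvd t L \<Longrightarrow> mdvd (mlcm s (t::'v::finite mon)) L"
  by (simp add: mdvd_iff lookup_mlcm)

lemma mdvd_diff: "mdvd s (t::'v mon) \<Longrightarrow> t = s + (t - s)"
  unfolding mdvd_def by auto

(* A common multiple a + wa = b + wb of a and b is a multiple of their lcm: the cofactors are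
   m times the cofactors of the lcm.  This locates an S-polynomial inside a cancellation. *)
lemma mlcm_cofactors:
  assumes "a + wa = b + (wb::'v::finite mon)"
  shows "\<exists>m. wa = m + (mlcm a b - a) \<and> wb = m + (mlcm a b - b)"
proof -
  let ?t = "mlcm a b"
  have "mdvd a (a + wa)" unfolding mdvd_def by blast
  moreover have "mdvd b (a + wa)" unfolding mdvd_def using assms by blast
  ultimately have "mdvd ?t (a + wa)" by (rule mlcm_least)
  then obtain m where La: "a + wa = ?t + m" unfolding mdvd_def by blast
  then have Lb: "b + wb = ?t + m" using assms by simp
  obtain da where da: "?t = a + da" using mdvd_mlcm1[of a b] unfolding mdvd_def by blast
  obtain db where db: "?t = b + db" using mdvd_mlcm2[of b a] unfolding mdvd_def by blast
  have "wa = m + (?t - a)" using La da by (simp add: ac_simps)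
  moreover have "wb = m + (?t - b)" using Lb db by (simp add: ac_simps)
  ultimately show ?thesis by blast
qed

lemma spoly_multiple:
  fixes ord :: "'v mon \<Rightarrow> 'v mon \<Rightarrow> bool" and p q :: "('v, 'k::field) mpoly"
  defines "t \<equiv> mlcm (lm ord p) (lm ord q)"
  shows "tmul 1 (m + (t - lm ord p)) p
           = tmul 1 m (spoly ord p q) + tmul (lc ord p / lc ord q) (m + (t - lm ord q)) q"
  unfolding spoly_def Let_def t_def tmul_def
  by (simp add: right_diff_distrib mult.assoc[symmetric] mult_single)

lemma gen_ideal_zero: "0 \<in> gen_ideal f j"
  unfolding gen_ideal_def by (rule CollectI, rule exI[of _ "\<lambda>_. 0"]) simp

lemma gen_ideal_add: "a \<in> gen_ideal f j \<Longrightarrow> b \<in> gen_ideal f j \<Longrightarrow> a + b \<in> gen_ideal f j"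
  unfolding gen_ideal_def
proof clarify
  fix h h'
  show "\<exists>h''. (\<Sum>k = 1..j. h k * f k) + (\<Sum>k = 1..j. h' k * f k) = (\<Sum>k = 1..j. h'' k * f k)"
    by (rule exI[of _ "\<lambda>k. h k + h' k"]) (simp add: sum.distrib distrib_right)
qed

lemma gen_ideal_mult: "a \<in> gen_ideal f j \<Longrightarrow> r * a \<in> gen_ideal f j"
  unfolding gen_ideal_def
proof clarify
  fix h
  show "\<exists>h''. r * (\<Sum>k = 1..j. h k * f k) = (\<Sum>k = 1..j. h'' k * f k)"
    by (rule exI[of _ "\<lambda>k. r * h k"]) (simp add: sum_distrib_left mult.assoc)
qed

lemma gen_ideal_diff:
  "a \<in> gen_ideal f j \<Longrightarrow> b \<in> gen_ideal f j \<Longrightarrow> a - (b::('v, 'k::field) mpoly) \<in> gen_ideal f j"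
  using gen_ideal_add[of a f j "-1 * b"] gen_ideal_mult[of b f j "-1"] by simp

lemma gen_ideal_tmul: "a \<in> gen_ideal f j \<Longrightarrow> tmul c t a \<in> gen_ideal f j"
  unfolding tmul_def by (rule gen_ideal_mult)

lemma gen_ideal_Suc_iff:
  "q \<in> gen_ideal f (i + 1) \<longleftrightarrow> (\<exists>a h. a \<in> gen_ideal f i \<and> q = a + h * f (i + 1))"
proof
  assume "q \<in> gen_ideal f (i + 1)"
  then show "\<exists>a h. a \<in> gen_ideal f i \<and> q = a + h * f (i + 1)"
    unfolding gen_ideal_def by auto
next
  assume "\<exists>a h. a \<in> gen_ideal f i \<and> q = a + h * f (i + 1)"
  then obtain h0 h where q: "q = (\<Sum>k = 1..i. h0 k * f k) + h * f (i + 1)"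
    unfolding gen_ideal_def by blast
  have "q = (\<Sum>k = 1..i + 1. (h0(i + 1 := h)) k * f k)"
    unfolding q by simp
  then show "q \<in> gen_ideal f (i + 1)" unfolding gen_ideal_def by blast
qed


locale mon_order =
  fixes ord :: "'v::finite mon \<Rightarrow> 'v mon \<Rightarrow> bool"
  assumes ord: "deg_mon_order ord"
begin

lemma ord_refl [simp]: "ord s s"
  using ord unfolding deg_mon_order_def by blast

lemma ord_antisym: "ord s t \<Longrightarrow> ord t s \<Longrightarrow> s = t"
  using ord unfolding deg_mon_order_def by blast

lemma ord_trans: "ord s t \<Longrightarrow> ord t u \<Longrightarrow> ord s u"
  using ord unfolding deg_mon_order_def by blast

lemma ord_total: "ord s t \<or> ord t s"
  using ord unfolding deg_mon_order_def by blast

lemma ord_zero [simp]: "ord 0 t"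
  using ord unfolding deg_mon_order_def by blast

lemma ord_add_right: "ord s t \<Longrightarrow> ord (s + u) (t + u)"
  using ord unfolding deg_mon_order_def by blast

lemma ord_add_left: "ord s t \<Longrightarrow> ord (u + s) (u + t)"
  using ord_add_right by (simp add: add.commute)

lemma ord_add_mono: "ord s t \<Longrightarrow> ord u v \<Longrightarrow> ord (s + u) (t + v)"
  by (meson ord_add_left ord_add_right ord_trans)

lemma ord_add_strict_left: "ord s t \<Longrightarrow> s \<noteq> t \<Longrightarrow> ord (u + s) (u + t) \<and> u + s \<noteq> u + t"
  using ord_add_left by auto

lemma ord_add_cancel_left: "ord (u + s) (u + t) \<Longrightarrow> ord s t"
  by (metis add_left_cancel ord_add_left ord_antisym ord_total)

lemma ord_deg: "mdeg s < mdeg t \<Longrightarrow> ord s t \<and> s \<noteq> t"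
  using ord unfolding deg_mon_order_def by blast

(* Degree compatibility and finiteness of the variable type make every initial segment finite,
   hence the strict order is well-founded. *)
lemma lookup_le_mdeg: "Poly_Mapping.lookup s x \<le> mdeg s"
proof (cases "x \<in> Poly_Mapping.keys s")
  case True
  then show ?thesis unfolding mdeg_def by (metis finite_keys member_le_sum zero_le)
next
  case False
  then show ?thesis by (simp add: in_keys_iff)
qed

lemma finite_mdeg_le: "finite {s::'v mon. mdeg s \<le> n}"
proof -
  let ?B = "{h::'v \<Rightarrow> nat. \<forall>x. (x \<in> UNIV \<longrightarrow> h x \<in> {..n}) \<and> (x \<notin> UNIV \<longrightarrow> h x = 0)}"
  have "finite ?B" by (rule finite_set_of_finite_funs) auto
  moreover have "Poly_Mapping.lookup ` {s::'v mon. mdeg s \<le> n} \<subseteq> ?B"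
    using lookup_le_mdeg le_trans by fastforce
  ultimately have "finite (Poly_Mapping.lookup ` {s::'v mon. mdeg s \<le> n})"
    using finite_subset by blast
  moreover have "inj_on Poly_Mapping.lookup {s::'v mon. mdeg s \<le> n}"
    by (rule inj_onI, rule poly_mapping_eqI) simp
  ultimately show ?thesis using finite_imageD by blast
qed

lemma finite_ord_below: "finite {s. ord s t}"
proof -
  have "{s. ord s t} \<subseteq> {s. mdeg s \<le> mdeg t}"
    using ord_deg ord_antisym by (fastforce simp: not_less)
  then show ?thesis using finite_mdeg_le finite_subset by blast
qed

lemma wf_ord_less: "wf {(s, t). ord s t \<and> s \<noteq> t}"
proof (rule wf_finite_segments)
  show "irrefl {(s, t). ord s t \<and> s \<noteq> t}" by (simp add: irrefl_def)
  show "trans {(s, t). ord s t \<and> s \<noteq> t}"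
    unfolding trans_def using ord_trans ord_antisym by blast
  show "finite {s. (s, t) \<in> {(s, t). ord s t \<and> s \<noteq> t}}" for t
    by (rule finite_subset[OF _ finite_ord_below[of t]]) auto
qed

lemma ord_less_induct: "(\<And>t. (\<And>s. ord s t \<Longrightarrow> s \<noteq> t \<Longrightarrow> P s) \<Longrightarrow> P t) \<Longrightarrow> P t"
  by (rule wf_induct[OF wf_ord_less]) auto

lemma ex_max: "finite A \<Longrightarrow> A \<noteq> {} \<Longrightarrow> \<exists>t\<in>A. \<forall>s\<in>A. ord s t"
proof (induction A rule: finite_ne_induct)
  case (insert x F)
  then obtain t where "t \<in> F" "\<forall>s\<in>F. ord s t" by blast
  then show ?case using ord_total ord_trans by (metis insert_iff)
qed simp

lemma ex_min_on: "finite A \<Longrightarrow> A \<noteq> {} \<Longrightarrow> \<exists>a\<in>A. \<forall>b\<in>A. ord (\<phi> a) (\<phi> b)"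
proof (induction A rule: finite_ne_induct)
  case (insert x F)
  then obtain t where "t \<in> F" "\<forall>s\<in>F. ord (\<phi> t) (\<phi> s)" by blast
  then show ?case using ord_total ord_trans by (metis insert_iff)
qed simp

lemma lm_max:
  assumes "(p::('v, 'k::zero) mpoly) \<noteq> 0"
  shows "lm ord p \<in> Poly_Mapping.keys p \<and> (\<forall>s\<in>Poly_Mapping.keys p. ord s (lm ord p))"
proof -
  obtain t where t: "t \<in> Poly_Mapping.keys p" "\<forall>s\<in>Poly_Mapping.keys p. ord s t"
    using ex_max[of "Poly_Mapping.keys p"] assms by auto
  have "(THE t. t \<in> Poly_Mapping.keys p \<and> (\<forall>s\<in>Poly_Mapping.keys p. ord s t)) = t"
    by (rule the_equality) (use t ord_antisym in blast)+
  then show ?thesis using assms t unfolding lm_def by simp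
qed

lemma lm_zero [simp]: "lm ord 0 = 0"
  unfolding lm_def by simp

lemma lm_in_keys: "(p::('v, 'k::zero) mpoly) \<noteq> 0 \<Longrightarrow> lm ord p \<in> Poly_Mapping.keys p"
  using lm_max by blast

lemma keys_le_lm: "s \<in> Poly_Mapping.keys (p::('v, 'k::zero) mpoly) \<Longrightarrow> ord s (lm ord p)"
  using lm_max[of p] by (cases "p = 0") auto

lemma lm_le_bound: "\<forall>s\<in>Poly_Mapping.keys (p::('v, 'k::zero) mpoly). ord s T \<Longrightarrow> ord (lm ord p) T"
  using lm_in_keys[of p] by (cases "p = 0") (auto simp: lm_def)

lemma lc_nonzero: "(p::('v, 'k::zero) mpoly) \<noteq> 0 \<Longrightarrow> lc ord p \<noteq> 0"
  using lm_in_keys unfolding lc_def by (simp add: in_keys_iff)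

lemma lm_eqI:
  "t \<in> Poly_Mapping.keys (p::('v, 'k::zero) mpoly) \<Longrightarrow> \<forall>s\<in>Poly_Mapping.keys p. ord s t \<Longrightarrow> lm ord p = t"
  by (metis ord_antisym empty_iff keys_le_lm keys_zero lm_in_keys)

lemma lm_single: "c \<noteq> 0 \<Longrightarrow> lm ord (Poly_Mapping.single w c :: ('v, 'k::zero) mpoly) = w"
  by (rule lm_eqI) auto

lemma keys_mult_le:
  "s \<in> Poly_Mapping.keys (a * (b::('v, 'k::field) mpoly)) \<Longrightarrow> a \<noteq> 0 \<and> b \<noteq> 0 \<and> ord s (lm ord a + lm ord b)"
proof -
  assume "s \<in> Poly_Mapping.keys (a * b)"
  then obtain x y where "s = x + y" "x \<in> Poly_Mapping.keys a" "y \<in> Poly_Mapping.keys b"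
    using keys_mult by blast
  then show ?thesis using ord_add_mono[OF keys_le_lm keys_le_lm] by auto
qed

lemma lookup_tmul:
  "Poly_Mapping.lookup (tmul c t (q::('v, 'k::field) mpoly)) (t + s) = c * Poly_Mapping.lookup q s"
proof -
  have "Poly_Mapping.lookup (tmul c t q) (t + s)
      = (\<Sum>l. (c when t = l) * (\<Sum>r. Poly_Mapping.lookup q r when t + s = l + r))"
    unfolding tmul_def by (simp add: lookup_mult lookup_single)
  also have "\<dots> = (\<Sum>l. (c * (\<Sum>r. Poly_Mapping.lookup q r when t + s = l + r)) when t = l)"
    by (simp add: when_mult)
  also have "\<dots> = c * Poly_Mapping.lookup q s" by simp
  finally show ?thesis .
qed

lemma keys_tmul: "Poly_Mapping.keys (tmul c t (q::('v, 'k::field) mpoly)) \<subseteq> (\<lambda>s. t + s) ` Poly_Mapping.keys q"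
  unfolding tmul_def using keys_mult[of "Poly_Mapping.single t c" q] by (fastforce split: if_splits)

lemma keys_tmul_le: "s \<in> Poly_Mapping.keys (tmul c t (q::('v, 'k::field) mpoly)) \<Longrightarrow> ord s (t + lm ord q)"
  using keys_tmul keys_le_lm ord_add_left by blast

lemma tmul_lead:
  assumes "c \<noteq> 0" "(q::('v, 'k::field) mpoly) \<noteq> 0"
  shows "tmul c t q \<noteq> 0 \<and> lm ord (tmul c t q) = t + lm ord q \<and> lc ord (tmul c t q) = c * lc ord q"
proof -
  have lookup: "Poly_Mapping.lookup (tmul c t q) (t + lm ord q) = c * lc ord q"
    by (simp add: lookup_tmul lc_def)
  then have key: "t + lm ord q \<in> Poly_Mapping.keys (tmul c t q)"
    using assms lc_nonzero by (simp add: in_keys_iff)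
  have "lm ord (tmul c t q) = t + lm ord q"
    by (rule lm_eqI[OF key]) (use keys_tmul_le in blast)
  then show ?thesis using key lookup unfolding lc_def by auto
qed

lemma tmul_zero [simp]: "tmul 0 t q = 0"
  unfolding tmul_def by simp

lemma tmul_add: "tmul c t (p + q) = tmul c t p + tmul c t q"
  unfolding tmul_def by (simp add: distrib_left)

lemma tmul_tmul: "tmul c t (tmul d s q) = tmul (c * d) (t + s) (q::('v, 'k::field) mpoly)"
  unfolding tmul_def by (simp add: mult.assoc[symmetric] mult_single)

lemma tmul_mult: "tmul c t (p * q) = tmul c t p * (q::('v, 'k::field) mpoly)"
  unfolding tmul_def by (simp add: mult.assoc)

lemma cancel_lead:
  assumes "\<forall>s\<in>Poly_Mapping.keys (p::('v, 'k::field) mpoly). ord s T"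
    and "\<forall>s\<in>Poly_Mapping.keys q. ord s T"
    and "Poly_Mapping.lookup p T = Poly_Mapping.lookup q T"
  shows "\<forall>s\<in>Poly_Mapping.keys (p - q). ord s T \<and> s \<noteq> T"
  using assms keys_diff[of p q] by (auto simp: in_keys_iff lookup_minus)

lemma spoly_below_lcm:
  assumes "(p::('v, 'k::field) mpoly) \<noteq> 0" "q \<noteq> 0" "spoly ord p q \<noteq> 0"
  shows "ord (lm ord (spoly ord p q)) (mlcm (lm ord p) (lm ord q))
         \<and> lm ord (spoly ord p q) \<noteq> mlcm (lm ord p) (lm ord q)"
proof -
  define t where "t = mlcm (lm ord p) (lm ord q)"
  define u where "u = t - lm ord p"
  define v where "v = t - lm ord q"
  define \<kappa> where "\<kappa> = lc ord p / lc ord q"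
  have tu: "t = u + lm ord p"
    using mdvd_diff[OF mdvd_mlcm1[of "lm ord p" "lm ord q"]]
    unfolding t_def u_def by (simp add: add.commute)
  have tv: "t = v + lm ord q"
    using mdvd_diff[OF mdvd_mlcm2[of "lm ord q" "lm ord p"]]
    unfolding t_def v_def by (simp add: add.commute)
  have "\<forall>s\<in>Poly_Mapping.keys (tmul 1 u p - tmul \<kappa> v q). ord s t \<and> s \<noteq> t"
  proof (rule cancel_lead)
    show "\<forall>s\<in>Poly_Mapping.keys (tmul 1 u p). ord s t"
      using keys_tmul_le tu by metis
    show "\<forall>s\<in>Poly_Mapping.keys (tmul \<kappa> v q). ord s t"
      using keys_tmul_le tv by metis
    have "Poly_Mapping.lookup (tmul 1 u p) t = lc ord p"
      using lookup_tmul[of 1 u p "lm ord p"] tu unfolding lc_def by simp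
    moreover have "Poly_Mapping.lookup (tmul \<kappa> v q) t = \<kappa> * lc ord q"
      using lookup_tmul[of \<kappa> v q "lm ord q"] tv unfolding lc_def by simp
    ultimately show "Poly_Mapping.lookup (tmul 1 u p) t = Poly_Mapping.lookup (tmul \<kappa> v q) t"
      using lc_nonzero[OF assms(2)] unfolding \<kappa>_def by simp
  qed
  moreover have "spoly ord p q = tmul 1 u p - tmul \<kappa> v q"
    unfolding spoly_def Let_def t_def u_def v_def \<kappa>_def ..
  ultimately have "\<forall>s\<in>Poly_Mapping.keys (spoly ord p q). ord s t \<and> s \<noteq> t" by simp
  then show ?thesis using lm_in_keys[OF assms(3)] unfolding t_def by blast
qed

lemma lm_add_distinct:
  assumes "(p::('v, 'k::field) mpoly) \<noteq> 0" "q \<noteq> 0" "lm ord p \<noteq> lm ord q"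
  shows "ord (lm ord p) (lm ord (p + q)) \<and> ord (lm ord q) (lm ord (p + q))"
proof -
  have lm_sum: "lm ord (a + b) = lm ord b"
    if "ord (lm ord a) (lm ord b)" "lm ord a \<noteq> lm ord b" "a \<noteq> 0" "b \<noteq> 0"
    for a b :: "('v, 'k) mpoly"
  proof -
    have "Poly_Mapping.lookup a (lm ord b) = 0"
    proof (rule ccontr)
      assume "Poly_Mapping.lookup a (lm ord b) \<noteq> 0"
      then have "ord (lm ord b) (lm ord a)" using keys_le_lm by (simp add: in_keys_iff)
      then show False using that(1,2) ord_antisym by blast
    qed
    then have key: "lm ord b \<in> Poly_Mapping.keys (a + b)"
      using lm_in_keys[OF that(4)] by (simp add: in_keys_iff lookup_add)
    show ?thesis
      by (rule lm_eqI[OF key]) (use keys_add[of a b] keys_le_lm ord_trans that(1) in blast)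
  qed
  show ?thesis
  proof (cases "ord (lm ord p) (lm ord q)")
    case True
    then show ?thesis using lm_sum[of p q] assms by simp
  next
    case False
    then show ?thesis using lm_sum[of q p] assms ord_total by (metis add.commute)
  qed
qed

lemma lead_attained:
  assumes "finite A" "(q::('v, 'k::field) mpoly) = (\<Sum>x\<in>A. h x * b x)" "q \<noteq> 0"
    and "\<forall>x\<in>A. h x = 0 \<or> ord (lm ord (h x) + lm ord (b x)) (lm ord q)"
  shows "\<exists>x\<in>A. h x \<noteq> 0 \<and> b x \<noteq> 0 \<and> lm ord (h x) + lm ord (b x) = lm ord q"
proof -
  have "Poly_Mapping.lookup q (lm ord q) \<noteq> 0"
    using lm_in_keys[OF assms(3)] by (simp add: in_keys_iff)
  then have "(\<Sum>x\<in>A. Poly_Mapping.lookup (h x * b x) (lm ord q)) \<noteq> 0"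
    using assms(2) by (simp add: lookup_sum)
  then obtain x where x: "x \<in> A" "Poly_Mapping.lookup (h x * b x) (lm ord q) \<noteq> 0"
    using sum.not_neutral_contains_not_neutral by blast
  then have "h x \<noteq> 0 \<and> b x \<noteq> 0 \<and> ord (lm ord q) (lm ord (h x) + lm ord (b x))"
    using keys_mult_le by (simp add: in_keys_iff)
  moreover have "ord (lm ord (h x) + lm ord (b x)) (lm ord q)" using assms(4) x(1) calculation by blast
  ultimately show ?thesis using x(1) ord_antisym by blast
qed

lemma sig_less_iff: "sig_less ord (a, j) (b, k) \<longleftrightarrow> j < k \<or> (j = k \<and> ord a b \<and> a \<noteq> b)"
  unfolding sig_less_def by simp

lemma sig_less_irrefl: "\<not> sig_less ord x x"
  unfolding sig_less_def by auto

lemma sig_le_same_index: "ord a b \<Longrightarrow> sig_le ord (a, j) (b, j)"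
  unfolding sig_le_def sig_less_def by auto

lemma sig_less_trans:
  assumes "sig_less ord x y" "sig_less ord y z"
  shows "sig_less ord x z"
  using assms unfolding sig_less_def
proof (elim disjE conjE)
  assume "snd x = snd y" "ord (fst x) (fst y)" "fst x \<noteq> fst y"
    and "snd y = snd z" "ord (fst y) (fst z)" "fst y \<noteq> fst z"
  then show "snd x < snd z \<or> snd x = snd z \<and> ord (fst x) (fst z) \<and> fst x \<noteq> fst z"
    using ord_trans ord_antisym by metis
qed auto

lemma sig_le_antisym: "sig_le ord x y \<Longrightarrow> sig_le ord y x \<Longrightarrow> x = y"
  unfolding sig_le_def using sig_less_trans sig_less_irrefl by blast

lemma sig_le_less_trans: "sig_le ord x y \<Longrightarrow> sig_less ord y z \<Longrightarrow> sig_less ord x z"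
  unfolding sig_le_def using sig_less_trans by blast

lemma sig_less_cancel: "sig_less ord (m + a, j) (m + b, k) \<Longrightarrow> sig_less ord (a, j) (b, k)"
  unfolding sig_less_iff using ord_add_cancel_left by blast

end


(* The hypotheses of the theorem. *)
locale sig_criterion = mon_order ord for ord :: "'v::finite mon \<Rightarrow> 'v mon \<Rightarrow> bool" +
  fixes f :: "nat \<Rightarrow> ('v, 'k::field) mpoly"
    and i M l :: nat
    and g :: "nat \<Rightarrow> ('v, 'k) mpoly" and sg :: "nat \<Rightarrow> 'v mon" and jg :: "nat \<Rightarrow> nat"
    and p :: "nat \<Rightarrow> ('v, 'k) mpoly" and d :: "nat \<Rightarrow> 'k" and tau :: "nat \<Rightarrow> 'v mon"
    and G :: "('k \<times> 'v mon \<times> nat \<times> ('v, 'k) mpoly) set"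
  assumes notin: "f (i + 1) \<notin> gen_ideal f i"
    and g_in: "\<forall>k<M. g k \<in> gen_ideal f i"
    and g_GB: "is_GB ord {g k | k. k < M} (gen_ideal f i)"
    and p_in: "\<forall>k<l. p k \<in> gen_ideal f (i + 1) \<and> p k \<noteq> 0"
    and jg_le: "\<forall>k<M. jg k \<le> i"
    and G_def: "G = {(1, sg k, jg k, g k) | k. k < M}
                  \<union> {(1, 0, i + 1, f (i + 1))}
                  \<union> {(d k, tau k, i + 1, p k) | k. k < l}"
    and G_sig: "\<forall>x\<in>G. is_sig ord f (i + 1) (gc x) (gsig x) (gidx x) (gpoly x)
                     \<and> is_minsig ord f (i + 1) (gsig x) (gidx x) (gpoly x)"
    and pairs: "\<forall>x\<in>G. \<forall>y\<in>G. gidx x = i + 1 \<and> gpoly x \<noteq> gpoly y \<longrightarrow>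
        (let t = mlcm (lm ord (gpoly x)) (lm ord (gpoly y));
             u = t - lm ord (gpoly x); v = t - lm ord (gpoly y)
         in sig_le ord (v + gsig y, gidx y) (u + gsig x, i + 1) \<longrightarrow>
            ((gidx y = i + 1 \<and> u + gsig x = v + gsig y) \<or>
             (sig_less ord (v + gsig y, gidx y) (u + gsig x, i + 1) \<and>
              sig_std_rep ord f (i + 1) G (gc x) (u + gsig x) (spoly ord (gpoly x) (gpoly y)))))"
begin

lemma finite_G: "finite G"
  unfolding G_def by auto

lemma f_top_in_G: "(1, 0, i + 1, f (i + 1)) \<in> G"
  unfolding G_def by blast

lemma G_cases:
  "x \<in> G \<Longrightarrow> (gidx x \<le> i \<and> gpoly x \<in> gen_ideal f i) \<or> (gidx x = i + 1 \<and> gpoly x \<noteq> 0)"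
  using jg_le g_in p_in notin gen_ideal_zero unfolding G_def gidx_def gpoly_def by fastforce

lemma G_subset: "gpoly ` G \<subseteq> gen_ideal f (i + 1)"
proof -
  have "a \<in> gen_ideal f (i + 1)" if "a \<in> gen_ideal f i" for a
    using that gen_ideal_Suc_iff[of a f i] by (metis add.right_neutral mult_zero_left)
  moreover have "f (i + 1) \<in> gen_ideal f (i + 1)"
    using gen_ideal_zero gen_ideal_Suc_iff[of "f (i + 1)" f i] by (metis add.left_neutral mult.left_neutral)
  ultimately show ?thesis using g_in p_in unfolding G_def gpoly_def by auto
qed

lemma G_top_cofactor:
  assumes "x \<in> G" "gidx x = i + 1"
  shows "\<exists>a H. a \<in> gen_ideal f i \<and> gpoly x = a + H * f (i + 1) \<and> H \<noteq> 0
               \<and> lm ord H = gsig x \<and> lc ord H = gc x"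
proof -
  obtain h where h: "gpoly x = (\<Sum>k = 1..i + 1. h k * f k)" "h (i + 1) \<noteq> 0"
    "lc ord (h (i + 1)) = gc x" "lm ord (h (i + 1)) = gsig x"
    using G_sig assms unfolding is_sig_def by auto
  have "(\<Sum>k = 1..i. h k * f k) \<in> gen_ideal f i" unfolding gen_ideal_def by blast
  then show ?thesis using h by auto
qed

lemma G_gc_nonzero: "x \<in> G \<Longrightarrow> gidx x = i + 1 \<Longrightarrow> gc x \<noteq> 0"
  using G_top_cofactor lc_nonzero by metis

lemma G_minsig_unique:
  assumes "x \<in> G" "y \<in> G" "gpoly x = gpoly y"
  shows "gsig x = gsig y \<and> gidx x = gidx y"
proof -
  have "is_minsig ord f (i + 1) (gsig x) (gidx x) (gpoly x)"
    and "is_minsig ord f (i + 1) (gsig y) (gidx y) (gpoly y)"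
    using G_sig assms by auto
  then have "sig_le ord (gsig x, gidx x) (gsig y, gidx y)" "sig_le ord (gsig y, gidx y) (gsig x, gidx x)"
    using assms(3) unfolding is_minsig_def by metis+
  then show ?thesis using sig_le_antisym by blast
qed

(* has_sig_le mu q: q = a + h f_{i+1} with a in I_i and all monomials of h at most mu,
   i.e. q has a signature at most mu e_{i+1}; has_sig_less is the strict version. *)
definition has_sig_le :: "'v mon \<Rightarrow> ('v, 'k) mpoly \<Rightarrow> bool" where
  "has_sig_le \<mu> q \<longleftrightarrow> (\<exists>a h. a \<in> gen_ideal f i \<and> q = a + h * f (i + 1)
                              \<and> (\<forall>s\<in>Poly_Mapping.keys h. ord s \<mu>))"

definition has_sig_less :: "'v mon \<Rightarrow> ('v, 'k) mpoly \<Rightarrow> bool" where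
  "has_sig_less \<mu> q \<longleftrightarrow> (\<exists>a h. a \<in> gen_ideal f i \<and> q = a + h * f (i + 1)
                                \<and> (\<forall>s\<in>Poly_Mapping.keys h. ord s \<mu> \<and> s \<noteq> \<mu>))"

(* sig_rep P q: a standard representation of q w.r.t. G whose term signatures satisfy P. *)
definition sig_rep :: "('v mon \<times> nat \<Rightarrow> bool) \<Rightarrow> ('v, 'k) mpoly \<Rightarrow> bool" where
  "sig_rep P q \<longleftrightarrow> (\<exists>h. q = (\<Sum>x\<in>G. h x * gpoly x) \<and>
     (\<forall>x\<in>G. h x = 0 \<or> (ord (lm ord (h x) + lm ord (gpoly x)) (lm ord q) \<and> P (lm ord (h x) + gsig x, gidx x))))"

lemma has_sig_less_ideal: "a \<in> gen_ideal f i \<Longrightarrow> has_sig_less \<nu> a"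
  unfolding has_sig_less_def by (rule exI[of _ a], rule exI[of _ 0]) simp

lemma has_sig_less_add: "has_sig_less \<nu> q \<Longrightarrow> has_sig_less \<nu> q' \<Longrightarrow> has_sig_less \<nu> (q + q')"
proof -
  assume "has_sig_less \<nu> q" "has_sig_less \<nu> q'"
  then obtain a h a' h' where
    A: "a \<in> gen_ideal f i" "q = a + h * f (i + 1)" "\<forall>s\<in>Poly_Mapping.keys h. ord s \<nu> \<and> s \<noteq> \<nu>"
       "a' \<in> gen_ideal f i" "q' = a' + h' * f (i + 1)" "\<forall>s\<in>Poly_Mapping.keys h'. ord s \<nu> \<and> s \<noteq> \<nu>"
    unfolding has_sig_less_def by blast
  have "q + q' = (a + a') + (h + h') * f (i + 1)"
    unfolding A(2,5) by (simp add: algebra_simps)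
  moreover have "\<forall>s\<in>Poly_Mapping.keys (h + h'). ord s \<nu> \<and> s \<noteq> \<nu>"
    using A keys_add[of h h'] by blast
  ultimately show ?thesis using gen_ideal_add[OF A(1,4)] unfolding has_sig_less_def by blast
qed

lemma has_sig_less_sum:
  "finite A \<Longrightarrow> (\<And>x. x \<in> A \<Longrightarrow> has_sig_less \<nu> (P x)) \<Longrightarrow> has_sig_less \<nu> (\<Sum>x\<in>A. P x)"
  by (induction A rule: finite_induct)
     (auto intro: has_sig_less_add has_sig_less_ideal gen_ideal_zero)

lemma has_sig_less_tmul: "has_sig_less \<nu> q \<Longrightarrow> has_sig_less (t + \<nu>) (tmul c t q)"
proof -
  assume "has_sig_less \<nu> q"
  then obtain a h where
    A: "a \<in> gen_ideal f i" "q = a + h * f (i + 1)" "\<forall>s\<in>Poly_Mapping.keys h. ord s \<nu> \<and> s \<noteq> \<nu>"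
    unfolding has_sig_less_def by blast
  have "tmul c t q = tmul c t a + tmul c t h * f (i + 1)"
    unfolding A(2) tmul_add tmul_mult ..
  moreover have "\<forall>s\<in>Poly_Mapping.keys (tmul c t h). ord s (t + \<nu>) \<and> s \<noteq> t + \<nu>"
    using keys_tmul[of c t h] A(3) ord_add_strict_left by fastforce
  ultimately show ?thesis using gen_ideal_tmul[OF A(1)] unfolding has_sig_less_def by blast
qed

lemma has_sig_less_term:
  assumes "z \<in> G" "hz = 0 \<or> sig_less ord (lm ord hz + gsig z, gidx z) (\<nu>, i + 1)"
  shows "has_sig_less \<nu> (hz * gpoly z)"
proof (cases "hz = 0 \<or> gidx z \<le> i")
  case True
  then have "hz * gpoly z \<in> gen_ideal f i"
    using G_cases[OF assms(1)] gen_ideal_mult gen_ideal_zero by auto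
  then show ?thesis by (rule has_sig_less_ideal)
next
  case False
  then have top: "gidx z = i + 1" and sig: "ord (lm ord hz + gsig z) \<nu>" "lm ord hz + gsig z \<noteq> \<nu>"
    using assms G_cases[OF assms(1)] unfolding sig_less_iff by auto
  obtain a H where aH: "a \<in> gen_ideal f i" "gpoly z = a + H * f (i + 1)" "lm ord H = gsig z"
    using G_top_cofactor[OF assms(1) top] by blast
  show ?thesis unfolding has_sig_less_def
  proof (intro exI conjI)
    show "hz * a \<in> gen_ideal f i" using aH(1) by (rule gen_ideal_mult)
    show "hz * gpoly z = hz * a + (hz * H) * f (i + 1)"
      unfolding aH(2) by (simp add: algebra_simps)
    show "\<forall>s\<in>Poly_Mapping.keys (hz * H). ord s \<nu> \<and> s \<noteq> \<nu>"
    proof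
      fix s assume "s \<in> Poly_Mapping.keys (hz * H)"
      then have "ord s (lm ord hz + gsig z)" using keys_mult_le[of s hz H] aH(3) by simp
      then show "ord s \<nu> \<and> s \<noteq> \<nu>" using sig ord_trans ord_antisym by blast
    qed
  qed
qed

lemma has_sig_less_multiple:
  assumes "z \<in> G" "c \<noteq> 0" "sig_less ord (w + gsig z, gidx z) (\<nu>, i + 1)"
  shows "has_sig_less \<nu> (tmul c w (gpoly z))"
proof -
  have "lm ord (Poly_Mapping.single w c) = w" using assms(2) by (rule lm_single)
  then have "has_sig_less \<nu> (Poly_Mapping.single w c * gpoly z)"
    using has_sig_less_term[OF assms(1)] assms(3) by simp
  then show ?thesis unfolding tmul_def .
qed

lemma has_sig_less_of_rep:
  assumes "\<forall>z\<in>G. hz z = 0 \<or> sig_less ord (lm ord (hz z) + gsig z, gidx z) (\<nu>, i + 1)"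
  shows "has_sig_less \<nu> (\<Sum>z\<in>G. hz z * gpoly z)"
  by (rule has_sig_less_sum[OF finite_G]) (use has_sig_less_term assms in blast)

lemma sig_rep_mono: "sig_rep P q \<Longrightarrow> (\<And>\<sigma>. P \<sigma> \<Longrightarrow> Q \<sigma>) \<Longrightarrow> sig_rep Q q"
  unfolding sig_rep_def by blast

lemma sig_rep_zero: "sig_rep P 0"
  unfolding sig_rep_def by (rule exI[of _ "\<lambda>_. 0"]) simp

lemma sig_rep_lead:
  assumes "sig_rep P q" "q \<noteq> 0"
  shows "\<exists>y\<in>G. \<exists>hy::('v, 'k) mpoly. hy \<noteq> 0 \<and> gpoly y \<noteq> 0 \<and> lm ord hy + lm ord (gpoly y) = lm ord q
                  \<and> P (lm ord hy + gsig y, gidx y)"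
proof -
  obtain h where h: "q = (\<Sum>x\<in>G. h x * gpoly x)"
    "\<forall>x\<in>G. h x = 0 \<or> (ord (lm ord (h x) + lm ord (gpoly x)) (lm ord q) \<and> P (lm ord (h x) + gsig x, gidx x))"
    using assms(1) unfolding sig_rep_def by blast
  then obtain y where y: "y \<in> G" "h y \<noteq> 0" "gpoly y \<noteq> 0" "lm ord (h y) + lm ord (gpoly y) = lm ord q"
    using lead_attained[OF finite_G h(1) assms(2)] by blast
  moreover have "P (lm ord (h y) + gsig y, gidx y)" using h(2) y(1,2) by blast
  ultimately show ?thesis by blast
qed

lemma sig_rep_add_multiple:
  assumes rep: "sig_rep P q'" and x: "x \<in> G"
    and q: "q = q' + tmul c w (gpoly x)"
    and lm_q': "ord (lm ord q') (lm ord q)" and lm_x: "ord (w + lm ord (gpoly x)) (lm ord q)"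
    and P_x: "P (w + gsig x, gidx x)"
    and P_down: "\<And>a b j. ord a b \<Longrightarrow> P (b, j) \<Longrightarrow> P (a, j)"
  shows "sig_rep P q"
proof -
  obtain h where h: "q' = (\<Sum>y\<in>G. h y * gpoly y)" and bound:
    "\<forall>y\<in>G. h y = 0 \<or> (ord (lm ord (h y) + lm ord (gpoly y)) (lm ord q') \<and> P (lm ord (h y) + gsig y, gidx y))"
    using rep unfolding sig_rep_def by blast
  define e where "e = (\<lambda>y. if y = x then Poly_Mapping.single w c else 0)"
  have "(\<Sum>y\<in>G. e y * gpoly y) = (\<Sum>y\<in>G. if y = x then tmul c w (gpoly x) else 0)"
    by (rule sum.cong) (auto simp: e_def tmul_def)
  also have "\<dots> = tmul c w (gpoly x)" using x finite_G by simp
  finally have sum_eq: "q = (\<Sum>y\<in>G. (h y + e y) * gpoly y)"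
    unfolding q h by (simp add: distrib_right sum.distrib)
  have bounds: "h y + e y = 0 \<or> (ord (lm ord (h y + e y) + lm ord (gpoly y)) (lm ord q)
                  \<and> P (lm ord (h y + e y) + gsig y, gidx y))" if y: "y \<in> G" for y
  proof (cases "y = x \<and> h y + e y \<noteq> 0")
    case False
    then show ?thesis using bound y lm_q' ord_trans unfolding e_def by fastforce
  next
    case True
    have "Poly_Mapping.keys (e y) \<subseteq> {w}" unfolding e_def by auto
    then have "lm ord (h y + e y) \<in> Poly_Mapping.keys (h y) \<union> {w}"
      using True lm_in_keys keys_add[of "h y" "e y"] by blast
    then show ?thesis
    proof
      assume key: "lm ord (h y + e y) \<in> Poly_Mapping.keys (h y)"
      then have "h y \<noteq> 0" by auto
      then have "ord (lm ord (h y) + lm ord (gpoly y)) (lm ord q')" "P (lm ord (h y) + gsig y, gidx y)"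
        using bound y by blast+
      moreover have "ord (lm ord (h y + e y)) (lm ord (h y))" using keys_le_lm key by blast
      ultimately show ?thesis
        using lm_q' ord_add_right ord_trans P_down by meson
    qed (use True lm_x P_x in \<open>auto simp: add.commute\<close>)
  qed
  show ?thesis unfolding sig_rep_def
  proof (intro exI conjI ballI)
    show "q = (\<Sum>y\<in>G. (h y + e y) * gpoly y)" by (rule sum_eq)
  qed (rule bounds)
qed

lemma division: "q \<in> gen_ideal f i \<Longrightarrow> sig_rep (\<lambda>\<sigma>. snd \<sigma> \<le> i) q"
proof (induction "lm ord q" arbitrary: q rule: ord_less_induct)
  case (1 q)
  show ?case
  proof (cases "q = 0")
    case True
    then show ?thesis by (simp add: sig_rep_zero)
  next
    case q0: False
    obtain k where k: "k < M" "g k \<noteq> 0" "mdvd (lm ord (g k)) (lm ord q)"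
      using g_GB 1(2) q0 unfolding is_GB_def by blast
    define x where "x = ((1::'k), sg k, jg k, g k)"
    have x: "x \<in> G" "gpoly x = g k" "gidx x \<le> i"
      unfolding x_def G_def using k jg_le by (auto simp: gpoly_def gidx_def)
    define w where "w = lm ord q - lm ord (g k)"
    have w: "w + lm ord (g k) = lm ord q"
      using mdvd_diff[OF k(3)] unfolding w_def by (simp add: add.commute)
    define \<kappa> where "\<kappa> = lc ord q / lc ord (g k)"
    have lead: "tmul \<kappa> w (g k) \<noteq> 0 \<and> lm ord (tmul \<kappa> w (g k)) = lm ord q
                  \<and> lc ord (tmul \<kappa> w (g k)) = lc ord q"
      using tmul_lead[of \<kappa> "g k" w] k(2) lc_nonzero[OF q0] lc_nonzero[OF k(2)] w
      unfolding \<kappa>_def by simp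
    define q' where "q' = q - tmul \<kappa> w (g k)"
    have q'_in: "q' \<in> gen_ideal f i"
      unfolding q'_def using 1(2) g_in k(1) gen_ideal_diff gen_ideal_tmul by blast
    have q'_below: "\<forall>s\<in>Poly_Mapping.keys q'. ord s (lm ord q) \<and> s \<noteq> lm ord q"
      unfolding q'_def
    proof (rule cancel_lead)
      show "\<forall>s\<in>Poly_Mapping.keys q. ord s (lm ord q)" using keys_le_lm by blast
      show "\<forall>s\<in>Poly_Mapping.keys (tmul \<kappa> w (g k)). ord s (lm ord q)" using keys_le_lm lead by metis
      show "Poly_Mapping.lookup q (lm ord q) = Poly_Mapping.lookup (tmul \<kappa> w (g k)) (lm ord q)"
        using lead unfolding lc_def by metis
    qed
    have "sig_rep (\<lambda>\<sigma>. snd \<sigma> \<le> i) q'"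
      using 1(1)[OF _ _ q'_in] q'_below lm_in_keys sig_rep_zero by (cases "q' = 0") auto
    then show ?thesis
    proof (rule sig_rep_add_multiple[OF _ x(1)])
      show "q = q' + tmul \<kappa> w (gpoly x)" unfolding q'_def x(2) by simp
      show "ord (lm ord q') (lm ord q)" using q'_below lm_le_bound by blast
    qed (use w x in simp_all)
  qed
qed

(* Induction hypothesis in usable form: with representations for all bounds below mu, every q
   strictly below mu has a representation with signatures strictly below mu e_{i+1}. *)
lemma sig_rep_less:
  assumes IH: "\<And>\<mu>' q. ord \<mu>' \<mu> \<Longrightarrow> \<mu>' \<noteq> \<mu> \<Longrightarrow> has_sig_le \<mu>' q
                      \<Longrightarrow> sig_rep (\<lambda>\<sigma>. sig_le ord \<sigma> (\<mu>', i + 1)) q"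
    and q: "has_sig_less \<mu> q"
  shows "sig_rep (\<lambda>\<sigma>. sig_less ord \<sigma> (\<mu>, i + 1)) q"
proof -
  obtain a h where A: "a \<in> gen_ideal f i" "q = a + h * f (i + 1)"
    "\<forall>s\<in>Poly_Mapping.keys h. ord s \<mu> \<and> s \<noteq> \<mu>"
    using q unfolding has_sig_less_def by blast
  show ?thesis
  proof (cases "h = 0")
    case True
    then have "q \<in> gen_ideal f i" using A(1,2) by simp
    then have "sig_rep (\<lambda>\<sigma>. snd \<sigma> \<le> i) q" by (rule division)
    then show ?thesis by (rule sig_rep_mono) (simp add: sig_less_def)
  next
    case False
    then have lt: "ord (lm ord h) \<mu>" "lm ord h \<noteq> \<mu>" using A(3) lm_in_keys by auto
    have "has_sig_le (lm ord h) q"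
      unfolding has_sig_le_def using A(1,2) keys_le_lm by (intro exI conjI) auto
    then have rep: "sig_rep (\<lambda>\<sigma>. sig_le ord \<sigma> (lm ord h, i + 1)) q" by (rule IH[OF lt])
    have less: "sig_less ord (lm ord h, i + 1) (\<mu>, i + 1)"
      using lt unfolding sig_less_iff by simp
    show ?thesis
      by (rule sig_rep_mono[OF rep]) (rule sig_le_less_trans[OF _ less])
  qed
qed

(* The reducers for mu are the elements of G with signature in e_{i+1} dividing mu;
   lead_of mu x is the leading monomial of the multiple of x with signature mu e_{i+1}. *)
definition reducers :: "'v mon \<Rightarrow> ('k \<times> 'v mon \<times> nat \<times> ('v, 'k) mpoly) set" where
  "reducers \<mu> = {x\<in>G. gidx x = i + 1 \<and> mdvd (gsig x) \<mu>}"

definition lead_of :: "'v mon \<Rightarrow> 'k \<times> 'v mon \<times> nat \<times> ('v, 'k) mpoly \<Rightarrow> 'v mon" where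
  "lead_of \<mu> x = (\<mu> - gsig x) + lm ord (gpoly x)"

lemma minimal_reducer_exists: "\<exists>x\<in>reducers \<mu>. \<forall>z\<in>reducers \<mu>. ord (lead_of \<mu> x) (lead_of \<mu> z)"
proof (rule ex_min_on)
  show "finite (reducers \<mu>)" unfolding reducers_def using finite_G by simp
  have "(1, 0, i + 1, f (i + 1)) \<in> reducers \<mu>"
    using f_top_in_G unfolding reducers_def mdvd_def gsig_def gidx_def by simp
  then show "reducers \<mu> \<noteq> {}" by blast
qed

lemma reducer_multiple_lead:
  assumes "x \<in> reducers \<mu>" "k \<noteq> 0"
  shows "tmul k (\<mu> - gsig x) (gpoly x) \<noteq> 0 \<and> lm ord (tmul k (\<mu> - gsig x) (gpoly x)) = lead_of \<mu> x"
proof -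
  have "x \<in> G" "gidx x = i + 1" using assms(1) unfolding reducers_def by auto
  then have "gpoly x \<noteq> 0" using G_cases by fastforce
  then show ?thesis using tmul_lead[OF assms(2)] unfolding lead_of_def by blast
qed

lemma top_reduction:
  assumes s: "has_sig_le \<mu> s" and x: "x \<in> reducers \<mu>"
  shows "\<exists>k. has_sig_less \<mu> (s - tmul k (\<mu> - gsig x) (gpoly x))"
proof -
  obtain a h where A: "a \<in> gen_ideal f i" "s = a + h * f (i + 1)" "\<forall>s\<in>Poly_Mapping.keys h. ord s \<mu>"
    using s unfolding has_sig_le_def by blast
  have xG: "x \<in> G" "gidx x = i + 1" and \<mu>: "\<mu> = gsig x + (\<mu> - gsig x)"
    using x mdvd_diff unfolding reducers_def by auto
  obtain ax H where H: "ax \<in> gen_ideal f i" "gpoly x = ax + H * f (i + 1)"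
    "lm ord H = gsig x" "lc ord H = gc x"
    using G_top_cofactor[OF xG] by blast
  define w where "w = \<mu> - gsig x"
  define k where "k = Poly_Mapping.lookup h \<mu> / gc x"
  have "s - tmul k w (gpoly x) = (a - tmul k w ax) + (h - tmul k w H) * f (i + 1)"
    unfolding A(2) H(2) tmul_add tmul_mult by (simp add: algebra_simps)
  moreover have "\<forall>s\<in>Poly_Mapping.keys (h - tmul k w H). ord s \<mu> \<and> s \<noteq> \<mu>"
  proof (rule cancel_lead[OF A(3)])
    show "\<forall>s\<in>Poly_Mapping.keys (tmul k w H). ord s \<mu>"
      using keys_tmul_le H(3) \<mu> unfolding w_def by (metis add.commute)
    have "Poly_Mapping.lookup (tmul k w H) \<mu> = k * lc ord H"
      using lookup_tmul[of k w H "lm ord H"] H(3) \<mu> unfolding w_def lc_def by (simp add: add.commute)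
    then show "Poly_Mapping.lookup h \<mu> = Poly_Mapping.lookup (tmul k w H) \<mu>"
      using H(4) G_gc_nonzero[OF xG] unfolding k_def by simp
  qed
  moreover have "a - tmul k w ax \<in> gen_ideal f i"
    using A(1) H(1) gen_ideal_diff gen_ideal_tmul by blast
  ultimately show ?thesis unfolding has_sig_less_def w_def by blast
qed

lemma spoly_sig_rep:
  assumes "x \<in> G" "y \<in> G" "gidx x = i + 1" "gpoly x \<noteq> gpoly y"
    and t: "t = mlcm (lm ord (gpoly x)) (lm ord (gpoly y))"
    and less: "sig_less ord (t - lm ord (gpoly y) + gsig y, gidx y) (t - lm ord (gpoly x) + gsig x, i + 1)"
  shows "sig_rep (\<lambda>\<sigma>. sig_le ord \<sigma> (t - lm ord (gpoly x) + gsig x, i + 1)) (spoly ord (gpoly x) (gpoly y))"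
proof -
  have "sig_std_rep ord f (i + 1) G (gc x) (t - lm ord (gpoly x) + gsig x) (spoly ord (gpoly x) (gpoly y))"
    using pairs assms sig_less_irrefl unfolding Let_def sig_le_def by metis
  then show ?thesis unfolding sig_std_rep_def sig_rep_def by blast
qed

(* With x a minimal reducer for mu = m sigma, a polynomial S below lcm-level t (where
   lead_of mu x = m t) with a representation up to sigma e_{i+1} is strictly below sigma:
   a term of signature exactly sigma e_{i+1} would be a reducer with smaller lead. *)
lemma below_minimal_reducer:
  assumes x: "\<forall>z\<in>reducers \<mu>. ord (lead_of \<mu> x) (lead_of \<mu> z)"
    and \<mu>: "\<mu> = m + \<sigma>" and lead: "lead_of \<mu> x = m + t"
    and S: "S \<noteq> 0 \<Longrightarrow> ord (lm ord S) t \<and> lm ord S \<noteq> t"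
    and rep: "sig_rep (\<lambda>\<tau>. sig_le ord \<tau> (\<sigma>, i + 1)) S"
  shows "has_sig_less \<sigma> S"
proof (cases "S = 0")
  case True
  then show ?thesis using has_sig_less_ideal[OF gen_ideal_zero] by simp
next
  case S0: False
  obtain h where h: "S = (\<Sum>z\<in>G. h z * gpoly z)" and bound:
    "\<forall>z\<in>G. h z = 0 \<or> (ord (lm ord (h z) + lm ord (gpoly z)) (lm ord S)
                        \<and> sig_le ord (lm ord (h z) + gsig z, gidx z) (\<sigma>, i + 1))"
    using rep unfolding sig_rep_def by blast
  have "h z = 0 \<or> sig_less ord (lm ord (h z) + gsig z, gidx z) (\<sigma>, i + 1)" if z: "z \<in> G" for z
  proof (rule ccontr)
    assume "\<not> ?thesis"
    then have top: "lm ord (h z) + gsig z = \<sigma>" "gidx z = i + 1"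
      and lm_z: "ord (lm ord (h z) + lm ord (gpoly z)) (lm ord S)"
      using bound z unfolding sig_le_def by auto
    have \<mu>z: "\<mu> = gsig z + (m + lm ord (h z))" using \<mu> top by (simp add: ac_simps)
    then have "mdvd (gsig z) \<mu>" unfolding mdvd_def by (rule exI)
    then have "z \<in> reducers \<mu>" unfolding reducers_def using z top(2) by simp
    moreover have "lead_of \<mu> z = m + (lm ord (h z) + lm ord (gpoly z))"
    proof -
      have "\<mu> - gsig z = m + lm ord (h z)" using \<mu>z by simp
      then show ?thesis unfolding lead_of_def by (simp add: ac_simps)
    qed
    ultimately have ge: "ord (m + t) (m + (lm ord (h z) + lm ord (gpoly z)))"
      using x lead by metis
    have "ord (lm ord S) t" "lm ord S \<noteq> t" using S[OF S0] by auto
    then have "ord (lm ord (h z) + lm ord (gpoly z)) t" "lm ord (h z) + lm ord (gpoly z) \<noteq> t"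
      using lm_z ord_trans ord_antisym by blast+
    then show False using ge ord_add_strict_left ord_antisym by blast
  qed
  then show ?thesis using has_sig_less_of_rep h by simp
qed

(* A term of y meeting the top multiple of a reducer x with smaller signature cannot come from
   the same polynomial, since equal polynomials in G carry equal signatures. *)
lemma reducer_other_poly:
  assumes x: "x \<in> reducers \<mu>" and y: "y \<in> G"
    and meet: "wy + lm ord (gpoly y) = lead_of \<mu> x"
    and sig_y: "sig_less ord (wy + gsig y, gidx y) (\<mu>, i + 1)"
  shows "gpoly x \<noteq> gpoly y"
proof
  assume same: "gpoly x = gpoly y"
  have xG: "x \<in> G" "gidx x = i + 1" and \<mu>: "\<mu> = (\<mu> - gsig x) + gsig x"
    using x mdvd_diff unfolding reducers_def by (auto simp: add.commute)
  have "gsig y = gsig x" "gidx y = i + 1" "wy = \<mu> - gsig x"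
    using G_minsig_unique[OF xG(1) y same] xG(2) meet same unfolding lead_of_def by auto
  then show False using sig_y \<mu> sig_less_irrefl by metis
qed

(* The S-pair argument: if the leading monomial of the multiple (mu / sig x) x of a minimal
   reducer x coincides with that of a term of y with smaller signature, then that multiple is
   itself strictly below mu, because it is m times S(x, y) plus a multiple of y. *)
lemma minimal_reducer_multiple_below:
  assumes x: "x \<in> reducers \<mu>" "\<forall>z\<in>reducers \<mu>. ord (lead_of \<mu> x) (lead_of \<mu> z)"
    and y: "y \<in> G" "gpoly y \<noteq> 0"
    and meet: "wy + lm ord (gpoly y) = lead_of \<mu> x"
    and sig_y: "sig_less ord (wy + gsig y, gidx y) (\<mu>, i + 1)"
  shows "has_sig_less \<mu> (tmul 1 (\<mu> - gsig x) (gpoly x))"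
proof -
  have xG: "x \<in> G" "gidx x = i + 1" and \<mu>: "\<mu> = gsig x + (\<mu> - gsig x)"
    using x(1) mdvd_diff unfolding reducers_def by auto
  define w where "w = \<mu> - gsig x"
  define gx where "gx = gpoly x"
  define gy where "gy = gpoly y"
  define t where "t = mlcm (lm ord gx) (lm ord gy)"
  have gx0: "gx \<noteq> 0" using G_cases[OF xG(1)] xG(2) unfolding gx_def by auto
  obtain m where wm: "w = m + (t - lm ord gx)" and wym: "wy = m + (t - lm ord gy)"
    using mlcm_cofactors[of "lm ord gx" w "lm ord gy" wy] meet
    unfolding t_def lead_of_def w_def gx_def gy_def by (metis add.commute)
  have \<mu>m: "\<mu> = m + (t - lm ord gx + gsig x)" using \<mu> wm unfolding w_def by (simp add: ac_simps)
  have less: "sig_less ord (t - lm ord gy + gsig y, gidx y) (t - lm ord gx + gsig x, i + 1)"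
    using sig_y sig_less_cancel[of m] wym \<mu>m by (simp add: ac_simps)
  have "gx \<noteq> gy"
    using reducer_other_poly[OF x(1) y(1) meet sig_y] unfolding gx_def gy_def .
  then have spoly_rep: "sig_rep (\<lambda>\<sigma>. sig_le ord \<sigma> (t - lm ord gx + gsig x, i + 1)) (spoly ord gx gy)"
    using spoly_sig_rep[OF xG(1) y(1) xG(2)] less unfolding gx_def gy_def t_def by blast
  have "has_sig_less (t - lm ord gx + gsig x) (spoly ord gx gy)"
  proof (rule below_minimal_reducer[OF x(2) \<mu>m _ _ spoly_rep])
    show "lead_of \<mu> x = m + t"
      using wm mdvd_diff[OF mdvd_mlcm1, of "lm ord gx" "lm ord gy"]
      unfolding lead_of_def w_def gx_def t_def by (simp add: ac_simps)
    show "spoly ord gx gy \<noteq> 0 \<Longrightarrow> ord (lm ord (spoly ord gx gy)) t \<and> lm ord (spoly ord gx gy) \<noteq> t"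
      using spoly_below_lcm gx0 y(2) unfolding gy_def t_def by blast
  qed
  then have "has_sig_less (m + (t - lm ord gx + gsig x)) (tmul 1 m (spoly ord gx gy))"
    by (rule has_sig_less_tmul)
  then have S_below: "has_sig_less \<mu> (tmul 1 m (spoly ord gx gy))" unfolding \<mu>m .
  have "lc ord gx / lc ord gy \<noteq> 0"
    using lc_nonzero[OF gx0] lc_nonzero[OF y(2)] unfolding gy_def by simp
  then have y_below: "has_sig_less \<mu> (tmul (lc ord gx / lc ord gy) wy gy)"
    using has_sig_less_multiple[OF y(1) _ sig_y] unfolding gy_def by blast
  have "tmul 1 w gx = tmul 1 m (spoly ord gx gy) + tmul (lc ord gx / lc ord gy) wy gy"
    unfolding wm wym t_def by (rule spoly_multiple)
  then have "has_sig_less \<mu> (tmul 1 w gx)" using has_sig_less_add[OF S_below y_below] by simp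
  then show ?thesis unfolding w_def gx_def .
qed

lemma sig_rep_add_top_multiple:
  assumes rep: "sig_rep (\<lambda>\<sigma>. sig_less ord \<sigma> (\<mu>, i + 1)) r"
    and x: "x \<in> reducers \<mu>" and k: "k \<noteq> 0"
    and distinct: "r = 0 \<or> lm ord r \<noteq> lead_of \<mu> x"
  shows "sig_rep (\<lambda>\<sigma>. sig_le ord \<sigma> (\<mu>, i + 1)) (r + tmul k (\<mu> - gsig x) (gpoly x))"
proof -
  let ?T = "tmul k (\<mu> - gsig x) (gpoly x)"
  have xG: "x \<in> G" "gidx x = i + 1" and \<mu>: "\<mu> = (\<mu> - gsig x) + gsig x"
    using x mdvd_diff unfolding reducers_def by (auto simp: add.commute)
  have T: "?T \<noteq> 0" "lm ord ?T = lead_of \<mu> x" using reducer_multiple_lead[OF x k] by auto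
  have bounds: "ord (lm ord r) (lm ord (r + ?T)) \<and> ord (lm ord ?T) (lm ord (r + ?T))"
    using distinct lm_add_distinct[OF _ T(1)] T(2) by (cases "r = 0") auto
  show ?thesis
  proof (rule sig_rep_add_multiple[OF _ xG(1) refl])
    show "sig_rep (\<lambda>\<sigma>. sig_le ord \<sigma> (\<mu>, i + 1)) r"
      by (rule sig_rep_mono[OF rep]) (simp add: sig_le_def)
    show "sig_le ord (a, j) (\<mu>, i + 1)" if "ord a b" "sig_le ord (b, j) (\<mu>, i + 1)" for a b j
      using that sig_le_same_index sig_le_less_trans unfolding sig_le_def by blast
  qed (use bounds T \<mu> xG in \<open>simp_all add: lead_of_def sig_le_def\<close>)
qed

lemma main_step:
  assumes IH: "\<And>q. has_sig_less \<mu> q \<Longrightarrow> sig_rep (\<lambda>\<sigma>. sig_less ord \<sigma> (\<mu>, i + 1)) q"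
    and s: "has_sig_le \<mu> s"
  shows "sig_rep (\<lambda>\<sigma>. sig_le ord \<sigma> (\<mu>, i + 1)) s"
proof -
  have less_le: "sig_less ord \<sigma> (\<mu>, i + 1) \<Longrightarrow> sig_le ord \<sigma> (\<mu>, i + 1)" for \<sigma>
    unfolding sig_le_def by simp
  obtain x where x: "x \<in> reducers \<mu>" "\<forall>z\<in>reducers \<mu>. ord (lead_of \<mu> x) (lead_of \<mu> z)"
    using minimal_reducer_exists by blast
  obtain k where r: "has_sig_less \<mu> (s - tmul k (\<mu> - gsig x) (gpoly x))"
    using top_reduction[OF s x(1)] by blast
  define T where "T = tmul k (\<mu> - gsig x) (gpoly x)"
  define r where "r = s - T"
  have s_eq: "s = r + T" unfolding r_def by simp
  have r_below: "has_sig_less \<mu> r" using r unfolding r_def T_def .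
  have rep_r: "sig_rep (\<lambda>\<sigma>. sig_less ord \<sigma> (\<mu>, i + 1)) r" using IH r_below .
  consider (zero) "k = 0" | (survives) "k \<noteq> 0" "r = 0 \<or> lm ord r \<noteq> lead_of \<mu> x"
    | (cancelled) "k \<noteq> 0" "r \<noteq> 0" "lm ord r = lead_of \<mu> x" by blast
  then show ?thesis
  proof cases
    case zero
    then show ?thesis using rep_r s_eq less_le sig_rep_mono unfolding T_def by simp
  next
    case survives
    then show ?thesis using sig_rep_add_top_multiple[OF rep_r x(1)] s_eq unfolding T_def by simp
  next
    case cancelled
    obtain y and hy :: "('v, 'k) mpoly" where y: "y \<in> G" "gpoly y \<noteq> 0"
      "lm ord hy + lm ord (gpoly y) = lead_of \<mu> x" "sig_less ord (lm ord hy + gsig y, gidx y) (\<mu>, i + 1)"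
      using sig_rep_lead[OF rep_r cancelled(2)] cancelled(3) by metis
    have "has_sig_less \<mu> (tmul 1 (\<mu> - gsig x) (gpoly x))"
      by (rule minimal_reducer_multiple_below[OF x y])
    then have "has_sig_less (0 + \<mu>) (tmul k 0 (tmul 1 (\<mu> - gsig x) (gpoly x)))"
      by (rule has_sig_less_tmul)
    then have "has_sig_less \<mu> T" unfolding T_def tmul_tmul by simp
    then have "has_sig_less \<mu> (r + T)" by (rule has_sig_less_add[OF r_below])
    then have "has_sig_less \<mu> s" by (simp only: s_eq)
    then have "sig_rep (\<lambda>\<sigma>. sig_less ord \<sigma> (\<mu>, i + 1)) s" by (rule IH)
    then show ?thesis by (rule sig_rep_mono) (rule less_le)
  qed
qed

lemma main_claim: "has_sig_le \<mu> s \<Longrightarrow> sig_rep (\<lambda>\<sigma>. sig_le ord \<sigma> (\<mu>, i + 1)) s"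
proof (induction \<mu> arbitrary: s rule: ord_less_induct)
  case (1 \<mu>)
  have "\<And>q. has_sig_less \<mu> q \<Longrightarrow> sig_rep (\<lambda>\<sigma>. sig_less ord \<sigma> (\<mu>, i + 1)) q"
    by (rule sig_rep_less) (use 1 in blast)+
  then show ?case using main_step 1(2) by blast
qed

lemma groebner: "is_GB ord (gpoly ` G) (gen_ideal f (i + 1))"
  unfolding is_GB_def
proof (intro conjI ballI impI)
  show "finite (gpoly ` G)" using finite_G by simp
  show "gpoly ` G \<subseteq> gen_ideal f (i + 1)" by (rule G_subset)
  fix q assume q: "q \<in> gen_ideal f (i + 1)" "q \<noteq> 0"
  then obtain a h where "a \<in> gen_ideal f i" "q = a + h * f (i + 1)"
    using gen_ideal_Suc_iff by blast
  then have "has_sig_le (lm ord h) q" unfolding has_sig_le_def using keys_le_lm by blast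
  then obtain y and hy :: "('v, 'k) mpoly" where "y \<in> G" "gpoly y \<noteq> 0" "lm ord hy + lm ord (gpoly y) = lm ord q"
    using sig_rep_lead[OF main_claim q(2)] by blast
  then show "\<exists>g\<in>gpoly ` G. g \<noteq> 0 \<and> mdvd (lm ord g) (lm ord q)"
    unfolding mdvd_def by (metis add.commute image_eqI)
qed

end

theorem mainTheorem4:
  fixes ord :: "'v::finite mon \<Rightarrow> 'v mon \<Rightarrow> bool"
    and f :: "nat \<Rightarrow> ('v, 'k::field) mpoly"
    and i M l :: nat
    and g :: "nat \<Rightarrow> ('v, 'k) mpoly" and sg :: "nat \<Rightarrow> 'v mon" and jg :: "nat \<Rightarrow> nat"
    and p :: "nat \<Rightarrow> ('v, 'k) mpoly" and d :: "nat \<Rightarrow> 'k" and tau :: "nat \<Rightarrow> 'v mon"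
    and G :: "('k \<times> 'v mon \<times> nat \<times> ('v, 'k) mpoly) set"
  assumes ord: "deg_mon_order ord"
    and notin: "f (i + 1) \<notin> gen_ideal f i"
    and g_in: "\<forall>k<M. g k \<in> gen_ideal f i"
    and g_GB: "is_GB ord {g k | k. k < M} (gen_ideal f i)"
    and p_in: "\<forall>k<l. p k \<in> gen_ideal f (i + 1) \<and> p k \<noteq> 0"
    and d_nz: "\<forall>k<l. d k \<noteq> 0"
    and jg_le: "\<forall>k<M. jg k \<le> i"
    and G_def: "G = {(1, sg k, jg k, g k) | k. k < M}
                  \<union> {(1, 0, i + 1, f (i + 1))}
                  \<union> {(d k, tau k, i + 1, p k) | k. k < l}"
    and G_sig: "\<forall>x\<in>G. is_sig ord f (i + 1) (gc x) (gsig x) (gidx x) (gpoly x)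
                     \<and> is_minsig ord f (i + 1) (gsig x) (gidx x) (gpoly x)"
    and pairs: "\<forall>x\<in>G. \<forall>y\<in>G. gidx x = i + 1 \<and> gpoly x \<noteq> gpoly y \<longrightarrow>
        (let t = mlcm (lm ord (gpoly x)) (lm ord (gpoly y));
             u = t - lm ord (gpoly x); v = t - lm ord (gpoly y)
         in sig_le ord (v + gsig y, gidx y) (u + gsig x, i + 1) \<longrightarrow>
            ((gidx y = i + 1 \<and> u + gsig x = v + gsig y) \<or>
             (sig_less ord (v + gsig y, gidx y) (u + gsig x, i + 1) \<and>
              sig_std_rep ord f (i + 1) G (gc x) (u + gsig x) (spoly ord (gpoly x) (gpoly y)))))"
  shows "is_GB ord (gpoly ` G) (gen_ideal f (i + 1))"
proof -
  interpret sig_criterion ord f i M l g sg jg p d tau G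
    by unfold_locales (use ord notin g_in g_GB p_in jg_le G_def G_sig pairs in auto)
  show ?thesis by (rule groebner)
qed

end
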